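(* Consider a generalized cluster pattern with principal coefficients at $t_0$, and let $t\in\mathbb T_n$ be arbitrary. Then: (1) For $i\neq k$ in $[1,n]$, the entries $c^{(i)}_{(k,l),j}$ of $C^{(i)}_t$ with $l\in[1,r_k]$, $j\in[1,r_i]$ are all equal (independent of $l$ and $j$). (2) For each $i$, there are an integer $c$ and a sign $\epsilon\in\{1,-1\}$ such that $c^{(i)}_{(i,l),l}=c+\epsilon$ for all $l\in[1,r_i]$ and $c^{(i)}_{(i,l),j}=c$ for all $l\neq j$ in $[1,r_i]$.
   Context: A semifield $(\mathbb P,\oplus,\cdot)$ is a torsion-free multiplicative abelian group with a commutative, associative binary operation $\oplus$ over which multiplication distributes. For $p\in\mathbb P$ put $p^+=p/(p\oplus1)$, $p^-=1/(p\oplus1)$. The tropical semifield $\mathrm{Trop}(s_a\mid a\in I')$ ($I'$ finite) is the free abelian group on the $s_a$ with $\prod_a s_a^{a_a}\oplus\prod_a s_a^{b_a}=\prod_a s_a^{\min(a_a,b_a)}$. For skew-symmetrizable $B\in\mathrm{Mat}_{n\times n}(\mathbb Z)$, $\mu_k(B)$ denotes Fomin–Zelevinsky matrix mutation. Generalized labeled seed: fix positive integers $r_1,\dots,r_n$; a seed $\Sigma=(\mathbf x,\mathbf p,B)$ has $B$ skew-symmetrizable with $i$-th column divisible by $r_i$, coefficients $\mathbf p_i=(p_{i,1},\dots,p_{i,r_i})\in\mathbb P^{r_i}$, and cluster $\mathbf x$. With $\beta_{ij}=b_{ij}/r_j$, $p_{k;\pm}=\prod_{l=1}^{r_k}p_{k,l}^{\pm}$,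 the coefficient part of the mutation $\mu_k$ is: $B'=\mu_k(B)$, $p'_{k,j}=p_{k,j}^{-1}$, and for $i\neq k$: $p'_{i,j}=p_{i,j}p_{k;-}^{\beta_{ki}}$ if $\beta_{ik}>0$, $p'_{i,j}=p_{i,j}p_{k;+}^{\beta_{ki}}$ if $\beta_{ik}\le 0$ (the cluster mutates by $x'_k=x_k^{-1}\prod_l(p_{k,l}^+\prod_{b_{ik}>0}x_i^{\beta_{ik}}+p_{k,l}^-\prod_{b_{ik}<0}x_i^{-\beta_{ik}})$, $x'_i=x_i$ otherwise). A cluster pattern assigns seeds $\Sigma_t$ to vertices of the $n$-regular tree $\mathbb T_n$ with edges labeled $1,\dots,n$, adjacent seeds along a $k$-edge related by $\mu_k$; coefficients of $\Sigma_t$ are written $p_{i,j;t}$. Principal coefficients at $t_0$: $\mathbb P=\mathrm{Trop}(p_{i,j}\mid i\in[1,n],j\in[1,r_i])$ and $\Sigma_{t_0}$ has coefficients $\mathbf p_i=(p_{i,1},\dots,p_{i,r_i})$. Let $I'=\{(k,l):k\in[1,n],l\in[1,r_k]\}$ and $p_{(k,l)}=p_{k,l}$. For each $t$ and $i$, define $C^{(i)}_t=(c^{(i)}_{a,j})_{a\in I',j\in[1,r_i]}\in\mathrm{Mat}_{|I'|\times r_i}(\mathbb Z)$ by $p_{i,j;t}=\prod_{a\in I'}p_a^{c^{(i)}_{a,j}}$. *)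

theory Defs
  imports Main
begin

text \<open>Elements of the tropical semifield Trop(p_a | a in I'), I' = {(k,l)},
  are represented by their exponent vectors (the free abelian group written
  additively): a monomial prod_a p_a^(v a) is represented by v.
  Multiplication = addition, inverse = negation, and
  u (+) w = componentwise min.  Hence
  p^+ = p/(p(+)1) has exponent max(v,0), p^- = 1/(p(+)1) has exponent max(-v,0).\<close>

type_synonym trop = "nat \<times> nat \<Rightarrow> int"

definition trop_plus :: "trop \<Rightarrow> trop" where
  "trop_plus v = (\<lambda>a. max (v a) 0)"

definition trop_minus :: "trop \<Rightarrow> trop" where
  "trop_minus v = (\<lambda>a. max (- v a) 0)"

text \<open>Seeds (coefficient part): coefficients p i j (i in [1,n], j in [1,r i])
  and exchange matrix B.\<close>

type_synonym gseed = "(nat \<Rightarrow> nat \<Rightarrow> trop) \<times> (nat \<Rightarrow> nat \<Rightarrow> int)"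

definition skew_symmetrizable :: "nat \<Rightarrow> (nat \<Rightarrow> nat \<Rightarrow> int) \<Rightarrow> bool" where
  "skew_symmetrizable n B \<longleftrightarrow>
     (\<exists>d :: nat \<Rightarrow> int. (\<forall>i\<in>{1..n}. d i > 0) \<and>
        (\<forall>i\<in>{1..n}. \<forall>j\<in>{1..n}. d i * B i j = - (d j * B j i)))"

definition mat_mut :: "nat \<Rightarrow> (nat \<Rightarrow> nat \<Rightarrow> int) \<Rightarrow> (nat \<Rightarrow> nat \<Rightarrow> int)" where
  "mat_mut k B = (\<lambda>i j. if i = k \<or> j = k then - B i j
      else B i j + (\<bar>B i k\<bar> * B k j + B i k * \<bar>B k j\<bar>) div 2)"

definition pk_plus :: "(nat \<Rightarrow> nat) \<Rightarrow> (nat \<Rightarrow> nat \<Rightarrow> trop) \<Rightarrow> nat \<Rightarrow> trop" where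
  "pk_plus r p k = (\<lambda>a. \<Sum>l\<in>{1..r k}. trop_plus (p k l) a)"

definition pk_minus :: "(nat \<Rightarrow> nat) \<Rightarrow> (nat \<Rightarrow> nat \<Rightarrow> trop) \<Rightarrow> nat \<Rightarrow> trop" where
  "pk_minus r p k = (\<lambda>a. \<Sum>l\<in>{1..r k}. trop_minus (p k l) a)"

text \<open>Generalized seed mutation mu_k (coefficient and matrix part);
  beta i j = b i j / r j (exact by the divisibility assumption).\<close>
definition gmut :: "(nat \<Rightarrow> nat) \<Rightarrow> nat \<Rightarrow> gseed \<Rightarrow> gseed" where
  "gmut r k S = (let p = fst S; B = snd S; beta = (\<lambda>i j. B i j div int (r j)) in
     ((\<lambda>i j. if i = k then (\<lambda>a. - p k j a)
             else if beta i k > 0 then (\<lambda>a. p i j a + beta k i * pk_minus r p k a)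
             else (\<lambda>a. p i j a + beta k i * pk_plus r p k a)),
      mat_mut k B))"

text \<open>Seed at the vertex of T_n reached from t_0 by the path with edge labels ks.\<close>
definition seed_at :: "(nat \<Rightarrow> nat) \<Rightarrow> gseed \<Rightarrow> nat list \<Rightarrow> gseed" where
  "seed_at r S0 ks = foldl (\<lambda>S k. gmut r k S) S0 ks"

definition principal :: "nat \<Rightarrow> nat \<Rightarrow> trop" where
  "principal i j = (\<lambda>a. if a = (i, j) then 1 else 0)"

definition cmat :: "gseed \<Rightarrow> nat \<Rightarrow> nat \<Rightarrow> nat \<Rightarrow> nat \<Rightarrow> int" where
  "cmat S i k l j = fst S i j (k, l)"

end

theory Submission
  imports Defs
begin

text \<open>With principal coefficients, the exponent vector
  of p_{i,j} starts as the unit vector at (i,j); it stays of the form (a vector that is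
  constant on each block {(m,l) | l in [1,r m]}) + e_i times the unit vector at (i,j),
  with e_i = 1 or -1 independent of j.  Indeed, summing such vectors over j (with any
  function applied entrywise, as in p_{k;+} and p_{k;-}) gives a block-constant vector,
  and both inversion and adding block-constant vectors preserve the form.\<close>

definition block_shaped ::
  "(nat \<Rightarrow> nat) \<Rightarrow> nat \<Rightarrow> (nat \<Rightarrow> trop) \<Rightarrow> (nat \<Rightarrow> int) \<Rightarrow> int \<Rightarrow> bool" where
  "block_shaped r i q h e \<longleftrightarrow>
     (\<forall>j\<in>{1..r i}. \<forall>m. \<forall>l\<in>{1..r m}. q j (m, l) = h m + (if m = i \<and> l = j then e else 0))"

definition seed_block_shaped :: "(nat \<Rightarrow> nat) \<Rightarrow> gseed \<Rightarrow> bool" where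
  "seed_block_shaped r S \<longleftrightarrow>
     (\<forall>i. \<exists>h e. e \<in> {1, -1} \<and> block_shaped r i (fst S i) h e)"

lemma block_shaped_uminus:
  "block_shaped r i q h e \<Longrightarrow> block_shaped r i (\<lambda>j a. - q j a) (\<lambda>m. - h m) (- e)"
  unfolding block_shaped_def by simp

lemma block_shaped_add_block_const:
  assumes "block_shaped r i q h e"
    and "\<forall>m. \<forall>l\<in>{1..r m}. v (m, l) = w m"
  shows "block_shaped r i (\<lambda>j a. q j a + c * v a) (\<lambda>m. h m + c * w m) e"
  using assms unfolding block_shaped_def by simp

lemma sum_single_perturbation:
  fixes F :: "int \<Rightarrow> int"
  assumes "l \<in> {1..R}"
  shows "(\<Sum>l0\<in>{1..R}. F (x + (if l = l0 then e else 0))) = F (x + e) + int (R - 1) * F x"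
proof -
  have "(\<Sum>l0\<in>{1..R}. F (x + (if l = l0 then e else 0)))
      = F (x + e) + (\<Sum>l0\<in>{1..R} - {l}. F (x + (if l = l0 then e else 0)))"
    using assms by (subst sum.remove[of _ l]) auto
  also have "(\<Sum>l0\<in>{1..R} - {l}. F (x + (if l = l0 then e else 0))) = (\<Sum>l0\<in>{1..R} - {l}. F x)"
    by (rule sum.cong) auto
  also have "\<dots> = int (R - 1) * F x"
    using assms by simp
  finally show ?thesis .
qed

lemma block_shaped_sum:
  fixes F :: "int \<Rightarrow> int"
  assumes q: "block_shaped r k q h e" and l: "l \<in> {1..r m}"
  shows "(\<Sum>l0\<in>{1..r k}. F (q l0 (m, l))) =
    (if m = k then F (h m + e) + int (r k - 1) * F (h m) else int (r k) * F (h m))"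
proof (cases "m = k")
  case True
  have "(\<Sum>l0\<in>{1..r k}. F (q l0 (m, l))) = (\<Sum>l0\<in>{1..r k}. F (h m + (if l = l0 then e else 0)))"
    by (rule sum.cong) (use q l True in \<open>auto simp: block_shaped_def\<close>)
  also have "\<dots> = F (h m + e) + int (r k - 1) * F (h m)"
    using l True by (intro sum_single_perturbation) auto
  finally show ?thesis
    using True by simp
next
  case False
  have "(\<Sum>l0\<in>{1..r k}. F (q l0 (m, l))) = (\<Sum>l0\<in>{1..r k}. F (h m))"
    by (rule sum.cong) (use q l False in \<open>auto simp: block_shaped_def\<close>)
  then show ?thesis
    using False by simp
qed

lemma pk_plus_block_const:
  assumes "block_shaped r k (p k) h e"
  shows "\<exists>w. \<forall>m. \<forall>l\<in>{1..r m}. pk_plus r p k (m, l) = w m"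
  using block_shaped_sum[OF assms, where F = "\<lambda>v. max v 0"]
  unfolding pk_plus_def trop_plus_def
  by (intro exI[of _ "\<lambda>m. if m = k then max (h m + e) 0 + int (r k - 1) * max (h m) 0
                          else int (r k) * max (h m) 0"]) simp

lemma pk_minus_block_const:
  assumes "block_shaped r k (p k) h e"
  shows "\<exists>w. \<forall>m. \<forall>l\<in>{1..r m}. pk_minus r p k (m, l) = w m"
  using block_shaped_sum[OF assms, where F = "\<lambda>v. max (- v) 0"]
  unfolding pk_minus_def trop_minus_def
  by (intro exI[of _ "\<lambda>m. if m = k then max (- (h m + e)) 0 + int (r k - 1) * max (- h m) 0
                          else int (r k) * max (- h m) 0"]) simp

lemma seed_block_shaped_gmut:
  assumes "seed_block_shaped r S"
  shows "seed_block_shaped r (gmut r k S)"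
  unfolding seed_block_shaped_def
proof
  fix i
  obtain p B where S: "S = (p, B)"
    by (cases S)
  define beta where "beta = (\<lambda>i j. B i j div int (r j))"
  have mut: "fst (gmut r k S) i =
      (if i = k then (\<lambda>j a. - p k j a)
       else if beta i k > 0 then (\<lambda>j a. p i j a + beta k i * pk_minus r p k a)
       else (\<lambda>j a. p i j a + beta k i * pk_plus r p k a))"
    unfolding gmut_def S beta_def Let_def by simp
  obtain hk ek where ek: "ek \<in> {1, -1}" and k: "block_shaped r k (p k) hk ek"
    using assms unfolding S seed_block_shaped_def fst_conv by blast
  obtain hi ei where ei: "ei \<in> {1, -1}" and i: "block_shaped r i (p i) hi ei"
    using assms unfolding S seed_block_shaped_def fst_conv by blast
  obtain wm where wm: "\<forall>m. \<forall>l\<in>{1..r m}. pk_minus r p k (m, l) = wm m"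
    using pk_minus_block_const[where p = p, OF k] by blast
  obtain wp where wp: "\<forall>m. \<forall>l\<in>{1..r m}. pk_plus r p k (m, l) = wp m"
    using pk_plus_block_const[where p = p, OF k] by blast
  show "\<exists>h e. e \<in> {1, -1} \<and> block_shaped r i (fst (gmut r k S) i) h e"
  proof (cases "i = k")
    case True
    then show ?thesis
      using block_shaped_uminus[OF k] ek unfolding mut
      by (intro exI[of _ "\<lambda>m. - hk m"] exI[of _ "- ek"]) auto
  next
    case False
    show ?thesis
    proof (cases "beta i k > 0")
      case True
      then show ?thesis
        using \<open>i \<noteq> k\<close> block_shaped_add_block_const[OF i wm] ei unfolding mut by auto
    next
      case False
      then show ?thesis
        using \<open>i \<noteq> k\<close> block_shaped_add_block_const[OF i wp] ei unfolding mut by auto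
    qed
  qed
qed

lemma seed_block_shaped_seed_at:
  "seed_block_shaped r S0 \<Longrightarrow> seed_block_shaped r (seed_at r S0 ks)"
  unfolding seed_at_def
  by (induction ks arbitrary: S0) (simp_all add: seed_block_shaped_gmut)

lemma seed_block_shaped_principal: "seed_block_shaped r (principal, B0)"
  unfolding seed_block_shaped_def block_shaped_def principal_def
  by (intro allI exI[of _ "\<lambda>_. 0"] exI[of _ 1]) auto

theorem mainTheorem4:
  fixes n :: nat and r :: "nat \<Rightarrow> nat" and B0 :: "nat \<Rightarrow> nat \<Rightarrow> int"
    and ks :: "nat list"
  assumes r_pos: "\<forall>i\<in>{1..n}. r i > 0"
    and skew: "skew_symmetrizable n B0"
    and div: "\<forall>i\<in>{1..n}. \<forall>j\<in>{1..n}. int (r j) dvd B0 i j"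
    and ks_range: "set ks \<subseteq> {1..n}"
    and ks_reduced: "successively (\<noteq>) ks"
  shows "(\<forall>i\<in>{1..n}. \<forall>k\<in>{1..n}. i \<noteq> k \<longrightarrow>
            (\<forall>l\<in>{1..r k}. \<forall>l'\<in>{1..r k}. \<forall>j\<in>{1..r i}. \<forall>j'\<in>{1..r i}.
               cmat (seed_at r (principal, B0) ks) i k l j
                 = cmat (seed_at r (principal, B0) ks) i k l' j'))
       \<and> (\<forall>i\<in>{1..n}. \<exists>c::int. \<exists>\<epsilon>::int. \<epsilon> \<in> {1, -1} \<and>
            (\<forall>l\<in>{1..r i}. cmat (seed_at r (principal, B0) ks) i i l l = c + \<epsilon>) \<and>
            (\<forall>l\<in>{1..r i}. \<forall>j\<in>{1..r i}. l \<noteq> j \<longrightarrow>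
               cmat (seed_at r (principal, B0) ks) i i l j = c))"
proof -
  \<comment> \<open>The invariant holds along every sequence of mutations.\<close>
  define S where "S = seed_at r (principal, B0) ks"
  have shaped: "\<exists>h e. e \<in> {1, -1} \<and> block_shaped r i (fst S i) h e" for i
    using seed_block_shaped_seed_at[OF seed_block_shaped_principal]
    unfolding S_def seed_block_shaped_def by blast
  show ?thesis
    unfolding S_def[symmetric]
  proof (intro conjI ballI impI)
    fix i k l l' j j'
    assume "i \<noteq> k" "l \<in> {1..r k}" "l' \<in> {1..r k}" "j \<in> {1..r i}" "j' \<in> {1..r i}"
    then show "cmat S i k l j = cmat S i k l' j'"
      using shaped[of i] unfolding cmat_def block_shaped_def by fastforce
  next
    fix i
    obtain h e where "e \<in> {1, -1}" and "block_shaped r i (fst S i) h e"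
      using shaped[of i] by blast
    then show "\<exists>c \<epsilon>. \<epsilon> \<in> {1, -1} \<and>
        (\<forall>l\<in>{1..r i}. cmat S i i l l = c + \<epsilon>) \<and>
        (\<forall>l\<in>{1..r i}. \<forall>j\<in>{1..r i}. l \<noteq> j \<longrightarrow> cmat S i i l j = c)"
      unfolding cmat_def block_shaped_def by (intro exI[of _ "h i"] exI[of _ e]) auto
  qed
qed

end
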